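(* Let $1\le k\le n$. For any matrices $\mathcal{A}\in\Gamma_k$ and $\mathcal{B}\in\Gamma_k^*$ (in $\mathbb{S}^n$), $$\rho_k(\mathcal{A})\,\rho_k^*(\mathcal{B})\le \frac1n\,\mathcal{A}\cdot\mathcal{B},$$ where $\mathcal{A}\cdot\mathcal{B}=\sum_{i,j}a_{ij}b_{ij}=\operatorname{tr}(\mathcal{A}\mathcal{B})$.
   Context: $\mathbb{S}^n$ is the space of real symmetric $n\times n$ matrices. For $\lambda\in\mathbb{R}^n$, $\mathcal{S}_k(\lambda)=\sum_{i_1<\dots<i_k}\lambda_{i_1}\cdots\lambda_{i_k}$. $\Gamma_k=\{\lambda\in\mathbb{R}^n:\mathcal{S}_j(\lambda)>0,\ j=1,\dots,k\}$ and $\Gamma_k^*=\{\lambda\in\mathbb{R}^n:\lambda\cdot\mu\ge0\ \forall\mu\in\Gamma_k\}$. On $\Gamma_k$, $\rho_k(\lambda)=\big(\mathcal{S}_k(\lambda)/\binom nk\big)^{1/k}$; on $\Gamma_k^*$, $\rho_k^*(\lambda)=\inf\{\lambda\cdot\mu/n:\mu\in\Gamma_k,\ \rho_k(\mu)\ge1\}$. A matrix belongs to $\Gamma_k$ (resp. $\Gamma_k^*$) if its vector of eigenvalues does, and $\rho_k(\mathcal{A})$, $\rho_k^*(\mathcal{B})$ are evaluated at the eigenvalue vectors. *)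

theory Defs
  imports "Jordan_Normal_Form.Char_Poly"
begin

definition sym_mats :: "nat \<Rightarrow> real mat set" where
  "sym_mats n = {A. A \<in> carrier_mat n n \<and> transpose_mat A = A}"

definition eigenvalue_vector :: "real mat \<Rightarrow> real vec \<Rightarrow> bool" where
  "eigenvalue_vector A lam \<longleftrightarrow> dim_vec lam = dim_row A \<and>
     char_poly A = (\<Prod>i<dim_vec lam. [:- (lam $ i), 1:])"

definition elem_sym :: "nat \<Rightarrow> real vec \<Rightarrow> real" where
  "elem_sym k lam = (\<Sum>I \<in> {I. I \<subseteq> {0..<dim_vec lam} \<and> card I = k}. \<Prod>i\<in>I. lam $ i)"

definition Gamma :: "nat \<Rightarrow> nat \<Rightarrow> real vec set" where
  "Gamma n k = {lam \<in> carrier_vec n. \<forall>j\<in>{1..k}. elem_sym j lam > 0}"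

definition Gamma_dual :: "nat \<Rightarrow> nat \<Rightarrow> real vec set" where
  "Gamma_dual n k = {lam \<in> carrier_vec n. \<forall>mu\<in>Gamma n k. lam \<bullet> mu \<ge> 0}"

definition rho :: "nat \<Rightarrow> real vec \<Rightarrow> real" where
  "rho k lam = root k (elem_sym k lam / real (dim_vec lam choose k))"

definition rho_dual :: "nat \<Rightarrow> real vec \<Rightarrow> real" where
  "rho_dual k lam = Inf {(lam \<bullet> mu) / real (dim_vec lam) | mu.
       mu \<in> Gamma (dim_vec lam) k \<and> rho k mu \<ge> 1}"

definition mat_dot :: "real mat \<Rightarrow> real mat \<Rightarrow> real" where
  "mat_dot A B = (\<Sum>i<dim_row A. \<Sum>j<dim_col A. A $$ (i, j) * B $$ (i, j))"

end

theory Submission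
  imports Defs
begin

text \<open>
  Diagonalise A = P diag(lam) P^T and B = Q diag(mu) Q^T with orthogonal P and Q. Then
  A . B = sum_ij W_ij lam_i mu_j, where W_ij = ((P^T Q)_ij)^2 is doubly stochastic. If lam_p is
  maximal and mu_q minimal, matching p with q and spreading the remaining mass of row p and
  column q proportionally over the other entries keeps W doubly stochastic and does not increase
  the weighted sum; by induction some permutation sigma has sum_i lam_i mu_(sigma i) <= A . B.
  Since S_k is symmetric, lam o sigma^-1 / rho_k(lam) lies in Gamma_k and has rho_k = 1, so it is
  admissible in the infimum defining rho_k^*(mu), whence
  n rho_k(lam) rho_k^*(mu) <= sum_i lam_i mu_(sigma i).
\<close>

section \<open>Orthonormal matrices and Householder reflections\<close>

text \<open>JNF's \<open>orthogonal_mat\<close> only asks for pairwise orthogonal columns, hence this stronger notion.\<close>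

definition orthonormal_mat :: "nat \<Rightarrow> 'a :: field mat \<Rightarrow> bool" where
  "orthonormal_mat n P \<longleftrightarrow> P \<in> carrier_mat n n \<and> transpose_mat P * P = 1\<^sub>m n"

lemma orthonormal_mat_right_inverse:
  assumes "orthonormal_mat n P"
  shows "P * transpose_mat P = 1\<^sub>m n"
  using assms mat_mult_left_right_inverse[of "transpose_mat P" n P]
  unfolding orthonormal_mat_def by auto

lemma orthonormal_mat_transpose:
  assumes "orthonormal_mat n P"
  shows "orthonormal_mat n (transpose_mat P)"
  using assms orthonormal_mat_right_inverse[OF assms] unfolding orthonormal_mat_def by auto

lemma orthonormal_mat_mult:
  assumes P: "orthonormal_mat n P" and Q: "orthonormal_mat n Q"
  shows "orthonormal_mat n (P * Q)"
proof -
  have P': "P \<in> carrier_mat n n" "transpose_mat P \<in> carrier_mat n n"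
    and Q': "Q \<in> carrier_mat n n" "transpose_mat Q \<in> carrier_mat n n"
    using P Q unfolding orthonormal_mat_def by auto
  have "transpose_mat (P * Q) * (P * Q) = transpose_mat Q * (transpose_mat P * P) * Q"
    using P' Q' by (simp add: transpose_mult assoc_mult_mat[of _ n n _ n _ n])
  also have "\<dots> = 1\<^sub>m n"
    using P Q Q' unfolding orthonormal_mat_def by simp
  finally show ?thesis
    using P' Q' unfolding orthonormal_mat_def by simp
qed

lemma orthonormal_mat_col_sum_squares:
  assumes "orthonormal_mat n M" and "j < n"
  shows "(\<Sum>i<n. (M $$ (i, j))\<^sup>2) = 1"
proof -
  have M: "M \<in> carrier_mat n n" and MM: "transpose_mat M * M = 1\<^sub>m n"
    using assms(1) unfolding orthonormal_mat_def by simp_all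
  have "(\<Sum>i<n. (M $$ (i, j))\<^sup>2) = (transpose_mat M * M) $$ (j, j)"
    using M assms(2)
    by (auto simp: scalar_prod_def power2_eq_square atLeast0LessThan intro!: sum.cong)
  also have "\<dots> = 1"
    unfolding MM using assms(2) by simp
  finally show ?thesis .
qed

lemma orthonormal_mat_row_sum_squares:
  assumes "orthonormal_mat n M" and "i < n"
  shows "(\<Sum>j<n. (M $$ (i, j))\<^sup>2) = 1"
proof -
  have "M \<in> carrier_mat n n"
    using assms(1) unfolding orthonormal_mat_def by simp
  then have "(\<Sum>j<n. (M $$ (i, j))\<^sup>2) = (\<Sum>j<n. (transpose_mat M $$ (j, i))\<^sup>2)"
    using assms(2) by (intro sum.cong) auto
  also have "\<dots> = 1"
    by (rule orthonormal_mat_col_sum_squares[OF orthonormal_mat_transpose[OF assms(1)] assms(2)])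
  finally show ?thesis .
qed

text \<open>The reflection in the hyperplane orthogonal to \<open>w\<close>; for \<open>w = 0\<close> the junk value
  \<open>2 / 0 = 0\<close> makes it the identity.\<close>

definition householder_mat :: "nat \<Rightarrow> real vec \<Rightarrow> real mat" where
  "householder_mat n w = mat n n (\<lambda>(i, j). of_bool (i = j) - 2 / (w \<bullet> w) * w $ i * w $ j)"

lemma householder_mat_carrier [simp]: "householder_mat n w \<in> carrier_mat n n"
  unfolding householder_mat_def by simp

lemma transpose_householder_mat: "transpose_mat (householder_mat n w) = householder_mat n w"
  unfolding householder_mat_def by (intro eq_matI) auto

lemma householder_mat_involution:
  assumes w: "w \<in> carrier_vec n"
  shows "householder_mat n w * householder_mat n w = 1\<^sub>m n"
proof (rule eq_matI)
  fix i j assume "i < dim_row (1\<^sub>m n)" and "j < dim_col (1\<^sub>m n)"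
  then have i: "i < n" and j: "j < n" by auto
  define c where "c = 2 / (w \<bullet> w)"
  define \<delta> :: "nat \<Rightarrow> nat \<Rightarrow> real" where "\<delta> i j = of_bool (i = j)" for i j
  have ww: "w \<bullet> w = (\<Sum>k<n. w $ k * w $ k)"
    using w unfolding scalar_prod_def by (auto simp: atLeast0LessThan)
  have cc: "c * c * (w \<bullet> w) = 2 * c"
    unfolding c_def by (cases "w \<bullet> w = 0") (simp_all add: field_simps)
  have "(householder_mat n w * householder_mat n w) $$ (i, j)
      = (\<Sum>k<n. (\<delta> i k - c * w $ i * w $ k) * (\<delta> k j - c * w $ k * w $ j))"
    using i j unfolding householder_mat_def c_def \<delta>_def
    by (auto simp: scalar_prod_def atLeast0LessThan intro!: sum.cong)
  also have "\<dots> = (\<Sum>k<n. \<delta> i k * \<delta> k j)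
      - c * w $ i * (\<Sum>k<n. \<delta> k j * w $ k) - c * w $ j * (\<Sum>k<n. \<delta> i k * w $ k)
      + c * c * w $ i * w $ j * (\<Sum>k<n. w $ k * w $ k)"
    by (simp add: algebra_simps sum.distrib sum_subtractf sum_distrib_left)
  also have "\<dots> = of_bool (i = j) - 2 * c * w $ i * w $ j + c * c * (w \<bullet> w) * w $ i * w $ j"
    using i j unfolding ww \<delta>_def by simp
  also have "\<dots> = of_bool (i = j)"
    unfolding cc by simp
  finally show "(householder_mat n w * householder_mat n w) $$ (i, j) = 1\<^sub>m n $$ (i, j)"
    using i j by simp
qed (auto simp: householder_mat_def)

lemma orthonormal_householder_mat:
  assumes "w \<in> carrier_vec n"
  shows "orthonormal_mat n (householder_mat n w)"
  using householder_mat_involution[OF assms] unfolding orthonormal_mat_def transpose_householder_mat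
  by simp

lemma householder_mat_unit_vec:
  assumes u: "u \<in> carrier_vec n" and uu: "u \<bullet> u = 1" and n: "0 < n"
  shows "householder_mat n (u - unit_vec n 0) *\<^sub>v unit_vec n 0 = u"
proof (rule eq_vecI)
  define w where "w = u - unit_vec n 0"
  have w: "w \<in> carrier_vec n"
    using u unfolding w_def by simp
  have ww: "w \<bullet> w = 2 - 2 * u $ 0"
    using u uu n unfolding w_def
    by (simp add: minus_scalar_prod_distrib scalar_prod_minus_distrib)
  fix i assume "i < dim_vec u"
  then have i: "i < n"
    using u by simp
  have wi: "u $ i = of_bool (i = 0) + w $ i"
    using u i unfolding w_def by simp
  show "(householder_mat n w *\<^sub>v unit_vec n 0) $ i = u $ i"
  proof (cases "u $ 0 = 1")
    case True
    then have "w = 0\<^sub>v n"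
      using conjugate_square_eq_0_vec[OF w] ww by simp
    then show ?thesis
      using i n wi by (simp add: householder_mat_def)
  next
    case False
    moreover have "w $ 0 = u $ 0 - 1"
      using u n unfolding w_def by simp
    ultimately have "2 / (w \<bullet> w) * w $ 0 = -1"
      unfolding ww by (simp add: field_simps)
    then have "2 / (w \<bullet> w) * w $ i * w $ 0 = - w $ i"
      by (metis mult.assoc mult.commute mult_minus1_right)
    then show ?thesis
      using i n wi by (simp add: householder_mat_def)
  qed
qed (use u in \<open>simp add: householder_mat_def\<close>)

section \<open>Orthonormal diagonalisation of real symmetric matrices\<close>

lemma unit_eigenvector_exists:
  fixes A :: "real mat"
  assumes A: "A \<in> carrier_mat n n" and e: "eigenvalue A e"
  obtains u where "u \<in> carrier_vec n" "u \<bullet> u = 1" "A *\<^sub>v u = e \<cdot>\<^sub>v u"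
proof -
  obtain v where v: "v \<in> carrier_vec n" "v \<noteq> 0\<^sub>v n" and Av: "A *\<^sub>v v = e \<cdot>\<^sub>v v"
    using e A unfolding eigenvalue_def eigenvector_def by auto
  have vv: "v \<bullet> v > 0"
    using conjugate_square_greater_0_vec[OF v(1)] v(2) by simp
  define u where "u = (1 / sqrt (v \<bullet> v)) \<cdot>\<^sub>v v"
  have "u \<in> carrier_vec n"
    using v unfolding u_def by simp
  moreover have "u \<bullet> u = 1"
    using v vv unfolding u_def by simp
  moreover have "A *\<^sub>v u = e \<cdot>\<^sub>v u"
    using A v Av unfolding u_def by (simp add: mult_mat_vec smult_smult_assoc mult.commute)
  ultimately show ?thesis
    using that by blast
qed

lemma symmetric_mat_unit_vec_eigen_block:
  fixes A :: "'a :: comm_ring_1 mat"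
  assumes A: "A \<in> carrier_mat (Suc m) (Suc m)" and sym: "transpose_mat A = A"
    and col0: "A *\<^sub>v unit_vec (Suc m) 0 = e \<cdot>\<^sub>v unit_vec (Suc m) 0"
  defines "A3 \<equiv> mat m m (\<lambda>(i, j). A $$ (Suc i, Suc j))"
  shows "A = four_block_mat (mat 1 1 (\<lambda>_. e)) (0\<^sub>m 1 m) (0\<^sub>m m 1) A3"
    and "transpose_mat A3 = A3"
proof -
  have Ai0: "A $$ (i, 0) = (if i = 0 then e else 0)" if "i < Suc m" for i
    using arg_cong[OF col0, of "\<lambda>v. v $ i"] A that by simp
  have A0j: "A $$ (0, j) = (if j = 0 then e else 0)" if "j < Suc m" for j
    using arg_cong[OF sym, of "\<lambda>B. B $$ (j, 0)"] Ai0[OF that] A that by simp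
  show "A = four_block_mat (mat 1 1 (\<lambda>_. e)) (0\<^sub>m 1 m) (0\<^sub>m m 1) A3"
  proof (rule eq_matI)
    fix i j assume "i < dim_row (four_block_mat (mat 1 1 (\<lambda>_. e)) (0\<^sub>m 1 m) (0\<^sub>m m 1) A3)"
      and "j < dim_col (four_block_mat (mat 1 1 (\<lambda>_. e)) (0\<^sub>m 1 m) (0\<^sub>m m 1) A3)"
    then have i: "i < Suc m" and j: "j < Suc m"
      unfolding A3_def by auto
    show "A $$ (i, j) = four_block_mat (mat 1 1 (\<lambda>_. e)) (0\<^sub>m 1 m) (0\<^sub>m m 1) A3 $$ (i, j)"
      using i j Ai0 A0j unfolding A3_def by (cases i; cases j) auto
  qed (use A in \<open>auto simp: A3_def\<close>)
  show "transpose_mat A3 = A3"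
  proof (rule eq_matI)
    fix i j assume "i < dim_row A3" and "j < dim_col A3"
    then show "transpose_mat A3 $$ (i, j) = A3 $$ (i, j)"
      using arg_cong[OF sym, of "\<lambda>B. B $$ (Suc i, Suc j)"] A unfolding A3_def by auto
  qed (auto simp: A3_def)
qed

lemma four_block_diag_congruence:
  fixes P D :: "'a :: comm_ring_1 mat"
  assumes a: "a \<in> carrier_mat k k" and P: "P \<in> carrier_mat m m" and D: "D \<in> carrier_mat m m"
  defines "F \<equiv> four_block_mat (1\<^sub>m k) (0\<^sub>m k m) (0\<^sub>m m k) P"
  shows "transpose_mat F * four_block_mat a (0\<^sub>m k m) (0\<^sub>m m k) D * F
    = four_block_mat a (0\<^sub>m k m) (0\<^sub>m m k) (transpose_mat P * D * P)"
proof -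
  have FT: "transpose_mat F = four_block_mat (1\<^sub>m k) (0\<^sub>m k m) (0\<^sub>m m k) (transpose_mat P)"
    unfolding F_def using P by (subst transpose_four_block_mat) auto
  have "transpose_mat F * four_block_mat a (0\<^sub>m k m) (0\<^sub>m m k) D
      = four_block_mat a (0\<^sub>m k m) (0\<^sub>m m k) (transpose_mat P * D)"
    unfolding FT using a P D by (subst mult_four_block_mat) auto
  then show ?thesis
    unfolding F_def using a P D by (simp add: mult_four_block_mat[of _ k k _ m _ m _ _ k _ m])
qed

lemma orthonormal_mat_four_block:
  assumes "orthonormal_mat m P"
  shows "orthonormal_mat (k + m) (four_block_mat (1\<^sub>m k) (0\<^sub>m k m) (0\<^sub>m m k) P)"
proof -
  let ?F = "four_block_mat (1\<^sub>m k) (0\<^sub>m k m) (0\<^sub>m m k) P"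
  have P: "P \<in> carrier_mat m m" and PP: "transpose_mat P * P = 1\<^sub>m m"
    using assms unfolding orthonormal_mat_def by simp_all
  have F: "?F \<in> carrier_mat (k + m) (k + m)"
    using P by simp
  have "transpose_mat ?F \<in> carrier_mat (k + m) (k + m)"
    using F by simp
  then have "transpose_mat ?F * ?F = transpose_mat ?F * 1\<^sub>m (k + m) * ?F"
    using right_mult_one_mat by metis
  also have "\<dots> = 1\<^sub>m (k + m)"
    using four_block_diag_congruence[of "1\<^sub>m k" k P m "1\<^sub>m m"] P PP by simp
  finally show ?thesis
    using F unfolding orthonormal_mat_def by simp
qed

lemma symmetric_mat_deflation:
  fixes A :: "real mat"
  assumes A: "A \<in> carrier_mat (Suc m) (Suc m)" and sym: "transpose_mat A = A"
    and u: "u \<in> carrier_vec (Suc m)" "u \<bullet> u = 1" and Au: "A *\<^sub>v u = e \<cdot>\<^sub>v u"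
  obtains H A3 where "orthonormal_mat (Suc m) H" and "A3 \<in> carrier_mat m m" and "transpose_mat A3 = A3"
    and "transpose_mat H * A * H = four_block_mat (mat 1 1 (\<lambda>_. e)) (0\<^sub>m 1 m) (0\<^sub>m m 1) A3"
proof -
  let ?e0 = "unit_vec (Suc m) 0"
  define H where "H = householder_mat (Suc m) (u - ?e0)"
  have H: "H \<in> carrier_mat (Suc m) (Suc m)" and HT: "transpose_mat H = H"
    and HH: "H * H = 1\<^sub>m (Suc m)" and He: "H *\<^sub>v ?e0 = u"
    using u unfolding H_def
    by (simp_all add: transpose_householder_mat householder_mat_involution householder_mat_unit_vec)
  have Hu: "H *\<^sub>v u = ?e0"
    using H HH by (simp flip: He add: assoc_mult_mat_vec[symmetric, of H _ _ H])
  define A' where "A' = H * A * H"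
  have A': "A' \<in> carrier_mat (Suc m) (Suc m)"
    unfolding A'_def using A H by simp
  have symA': "transpose_mat A' = A'"
    unfolding A'_def using A H HT sym
    by (simp add: transpose_mult[of H "Suc m" "Suc m" "A * H" "Suc m"] transpose_mult[of A "Suc m" "Suc m" H "Suc m"])
  have "A' *\<^sub>v ?e0 = H *\<^sub>v (A *\<^sub>v (H *\<^sub>v ?e0))"
    unfolding A'_def using A H by (simp add: assoc_mult_mat_vec[of _ "Suc m" "Suc m" _ "Suc m"])
  also have "\<dots> = e \<cdot>\<^sub>v (H *\<^sub>v u)"
    using A H u unfolding He Au by (simp add: mult_mat_vec)
  also have "\<dots> = e \<cdot>\<^sub>v ?e0"
    unfolding Hu ..
  finally have col0: "A' *\<^sub>v ?e0 = e \<cdot>\<^sub>v ?e0" .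
  note block = symmetric_mat_unit_vec_eigen_block[OF A' symA' col0]
  have "orthonormal_mat (Suc m) H"
    using u unfolding H_def by (simp add: orthonormal_householder_mat)
  then show ?thesis
    using that[of H "mat m m (\<lambda>(i, j). A' $$ (Suc i, Suc j))"] block HT
    unfolding A'_def by simp
qed

lemma char_poly_orthonormal_congruence:
  assumes P: "orthonormal_mat n P" and A: "A \<in> carrier_mat n n"
  shows "char_poly (transpose_mat P * A * P) = char_poly A"
proof -
  have P': "P \<in> carrier_mat n n" "transpose_mat P \<in> carrier_mat n n"
    and PP: "transpose_mat P * P = 1\<^sub>m n" "P * transpose_mat P = 1\<^sub>m n"
    using P orthonormal_mat_right_inverse[OF P] unfolding orthonormal_mat_def by simp_all
  have "P * (transpose_mat P * A * P) * transpose_mat P = (P * transpose_mat P) * A * (P * transpose_mat P)"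
    using P' A by (simp add: assoc_mult_mat[of _ n n _ n _ n])
  also have "\<dots> = A"
    using A unfolding PP by simp
  finally have "similar_mat_wit A (transpose_mat P * A * P) P (transpose_mat P)"
    using P' A PP unfolding similar_mat_wit_def by simp
  then show ?thesis
    by (metis char_poly_similar similar_mat_def)
qed

lemma mat_diag_Cons:
  "mat_diag (Suc m) (\<lambda>i. (e # es) ! i)
    = four_block_mat (mat 1 1 (\<lambda>_. e)) (0\<^sub>m 1 m) (0\<^sub>m m 1) (mat_diag m (\<lambda>i. es ! i))"
  by (rule eq_matI) (auto simp: mat_diag_def nth_Cons')

theorem symmetric_mat_orthonormal_diagonalization:
  fixes A :: "real mat"
  assumes "A \<in> carrier_mat n n" and "transpose_mat A = A" and "char_poly A = (\<Prod>e\<leftarrow>es. [:- e, 1:])"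
  shows "\<exists>P. orthonormal_mat n P \<and> transpose_mat P * A * P = mat_diag n (\<lambda>i. es ! i)"
  using assms
proof (induction es arbitrary: n A)
  case Nil
  then have "n = 0"
    using degree_monic_char_poly[of A n] by auto
  with Nil show ?case
    by (intro exI[of _ "1\<^sub>m 0"]) (auto simp: orthonormal_mat_def mat_diag_def intro!: eq_matI)
next
  case (Cons e es n A)
  have A: "A \<in> carrier_mat n n" and sym: "transpose_mat A = A"
    and cp: "char_poly A = [:- e, 1:] * (\<Prod>e\<leftarrow>es. [:- e, 1:])"
    using Cons.prems by simp_all
  have "monic (\<Prod>e\<leftarrow>es. [:- e, 1:])"
    by (rule monic_prod_list) auto
  then have "degree (char_poly A) = Suc (degree (\<Prod>e\<leftarrow>es. [:- e, 1:]))"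
    unfolding cp by (subst degree_mult_eq) auto
  then obtain m where n: "n = Suc m"
    using degree_monic_char_poly[OF A] by (cases n) auto
  have "eigenvalue A e"
    unfolding eigenvalue_root_char_poly[OF A] cp by simp
  then obtain u where "u \<in> carrier_vec n" "u \<bullet> u = 1" "A *\<^sub>v u = e \<cdot>\<^sub>v u"
    using unit_eigenvector_exists A by blast
  then obtain H A3 where H: "orthonormal_mat n H" and A3: "A3 \<in> carrier_mat m m"
    and symA3: "transpose_mat A3 = A3"
    and HAH: "transpose_mat H * A * H = four_block_mat (mat 1 1 (\<lambda>_. e)) (0\<^sub>m 1 m) (0\<^sub>m m 1) A3"
    using symmetric_mat_deflation A sym unfolding n by metis
  have "[:- e, 1:] * char_poly A3 = [:- e, 1:] * (\<Prod>e\<leftarrow>es. [:- e, 1:])"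
    using char_poly_orthonormal_congruence[OF H A] char_poly_four_block_zeros_col[OF _ _ A3, of "mat 1 1 (\<lambda>_. e)"]
    unfolding HAH cp by (simp add: char_poly_defs det_def sign_def)
  then have "char_poly A3 = (\<Prod>e\<leftarrow>es. [:- e, 1:])"
    by (metis mult_cancel_left pCons_eq_0_iff zero_neq_one)
  then obtain P3 where P3: "orthonormal_mat m P3"
    and P3A3: "transpose_mat P3 * A3 * P3 = mat_diag m (\<lambda>i. es ! i)"
    using Cons.IH[OF A3 symA3] by blast
  define F where "F = four_block_mat (1\<^sub>m 1) (0\<^sub>m 1 m) (0\<^sub>m m 1) P3"
  have F: "orthonormal_mat n F"
    using orthonormal_mat_four_block[OF P3, of 1] unfolding F_def n by simp
  have "H \<in> carrier_mat n n" "transpose_mat H \<in> carrier_mat n n"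
    and "F \<in> carrier_mat n n" "transpose_mat F \<in> carrier_mat n n"
    using H F unfolding orthonormal_mat_def by simp_all
  then have "transpose_mat (H * F) * A * (H * F) = transpose_mat F * (transpose_mat H * A * H) * F"
    using A by (simp add: transpose_mult[of H n n F n] assoc_mult_mat[of _ n n _ n _ n])
  also have "\<dots> = mat_diag n (\<lambda>i. (e # es) ! i)"
    unfolding HAH F_def n mat_diag_Cons using four_block_diag_congruence[OF _ _ A3] P3 P3A3
    unfolding orthonormal_mat_def by simp
  finally show ?case
    using orthonormal_mat_mult[OF H F] by blast
qed

lemma sym_mats_eigen_decomposition:
  assumes "A \<in> sym_mats n" and "eigenvalue_vector A lam"
  obtains P where "orthonormal_mat n P" and "A = P * mat_diag n (\<lambda>i. lam $ i) * transpose_mat P"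
proof -
  have A: "A \<in> carrier_mat n n" and sym: "transpose_mat A = A"
    using assms(1) unfolding sym_mats_def by simp_all
  have "char_poly A = (\<Prod>e\<leftarrow>map (\<lambda>i. lam $ i) [0..<n]. [:- e, 1:])"
    using assms(2) A unfolding eigenvalue_vector_def
    by (simp add: prod.distinct_set_conv_list[symmetric] atLeast0LessThan)
  moreover have "mat_diag n (\<lambda>i. map (\<lambda>i. lam $ i) [0..<n] ! i) = mat_diag n (\<lambda>i. lam $ i)"
    by (rule eq_matI) (auto simp: mat_diag_def)
  ultimately obtain P where P: "orthonormal_mat n P"
    and PAP: "transpose_mat P * A * P = mat_diag n (\<lambda>i. lam $ i)"
    using symmetric_mat_orthonormal_diagonalization[OF A sym] by metis
  have P': "P \<in> carrier_mat n n" "transpose_mat P \<in> carrier_mat n n"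
    using P unfolding orthonormal_mat_def by simp_all
  have "P * mat_diag n (\<lambda>i. lam $ i) * transpose_mat P = (P * transpose_mat P) * A * (P * transpose_mat P)"
    unfolding PAP[symmetric] using P' A by (simp add: assoc_mult_mat[of _ n n _ n _ n])
  also have "\<dots> = A"
    using A unfolding orthonormal_mat_right_inverse[OF P] by simp
  finally show ?thesis
    using that P by simp
qed

lemma mult_mat_diag_transpose_index:
  fixes P :: "'a :: comm_semiring_1 mat"
  assumes "P \<in> carrier_mat n n" and "a < n" and "b < n"
  shows "(P * mat_diag n f * transpose_mat P) $$ (a, b) = (\<Sum>i<n. P $$ (a, i) * f i * P $$ (b, i))"
  using assms by (simp add: mat_diag_mult_right scalar_prod_def atLeast0LessThan)

lemma sum_swap_pairs:
  "(\<Sum>a\<in>A. \<Sum>b\<in>B. \<Sum>i\<in>I. \<Sum>j\<in>J. h a b i j)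
    = (\<Sum>i\<in>I. \<Sum>j\<in>J. \<Sum>a\<in>A. \<Sum>b\<in>B. h a b i j)"
proof -
  have "(\<Sum>a\<in>A. \<Sum>b\<in>B. \<Sum>i\<in>I. \<Sum>j\<in>J. h a b i j)
      = (\<Sum>a\<in>A. \<Sum>i\<in>I. \<Sum>b\<in>B. \<Sum>j\<in>J. h a b i j)"
    by (rule sum.cong[OF refl sum.swap])
  also have "\<dots> = (\<Sum>a\<in>A. \<Sum>i\<in>I. \<Sum>j\<in>J. \<Sum>b\<in>B. h a b i j)"
    by (intro sum.cong[OF refl] sum.swap)
  also have "\<dots> = (\<Sum>i\<in>I. \<Sum>a\<in>A. \<Sum>j\<in>J. \<Sum>b\<in>B. h a b i j)"
    by (rule sum.swap)
  also have "\<dots> = (\<Sum>i\<in>I. \<Sum>j\<in>J. \<Sum>a\<in>A. \<Sum>b\<in>B. h a b i j)"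
    by (rule sum.cong[OF refl sum.swap])
  finally show ?thesis .
qed

lemma mat_dot_spectral_decompositions:
  fixes P Q :: "real mat"
  assumes P: "P \<in> carrier_mat n n" and Q: "Q \<in> carrier_mat n n"
  shows "mat_dot (P * mat_diag n f * transpose_mat P) (Q * mat_diag n g * transpose_mat Q)
       = (\<Sum>i<n. \<Sum>j<n. ((transpose_mat P * Q) $$ (i, j))\<^sup>2 * f i * g j)"
proof -
  have G: "(transpose_mat P * Q) $$ (i, j) = (\<Sum>a<n. P $$ (a, i) * Q $$ (a, j))"
    if "i < n" "j < n" for i j
    using P Q that by (simp add: scalar_prod_def atLeast0LessThan)
  define t where "t a b i j = f i * g j * (P $$ (a, i) * Q $$ (a, j) * (P $$ (b, i) * Q $$ (b, j)))"
    for a b i j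
  have "mat_dot (P * mat_diag n f * transpose_mat P) (Q * mat_diag n g * transpose_mat Q)
      = (\<Sum>a<n. \<Sum>b<n. (\<Sum>i<n. P $$ (a, i) * f i * P $$ (b, i))
          * (\<Sum>j<n. Q $$ (a, j) * g j * Q $$ (b, j)))"
    unfolding mat_dot_def using P Q
    by (auto simp del: index_mult_mat(1) simp: mult_mat_diag_transpose_index intro!: sum.cong)
  also have "\<dots> = (\<Sum>a<n. \<Sum>b<n. \<Sum>i<n. \<Sum>j<n. t a b i j)"
    unfolding t_def by (simp add: sum_product mult_ac)
  also have "\<dots> = (\<Sum>i<n. \<Sum>j<n. \<Sum>a<n. \<Sum>b<n. t a b i j)"
    by (rule sum_swap_pairs)
  also have "\<dots> = (\<Sum>i<n. \<Sum>j<n. ((transpose_mat P * Q) $$ (i, j))\<^sup>2 * f i * g j)"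
    unfolding t_def
    by (intro sum.cong refl) (simp add: G power2_eq_square sum_product sum_distrib_left mult_ac)
  finally show ?thesis .
qed

section \<open>Doubly stochastic weights and permutations\<close>

definition doubly_stochastic_on :: "'a set \<Rightarrow> 'b set \<Rightarrow> ('a \<Rightarrow> 'b \<Rightarrow> real) \<Rightarrow> bool" where
  "doubly_stochastic_on I J W \<longleftrightarrow> (\<forall>i\<in>I. \<forall>j\<in>J. 0 \<le> W i j)
     \<and> (\<forall>i\<in>I. (\<Sum>j\<in>J. W i j) = 1) \<and> (\<forall>j\<in>J. (\<Sum>i\<in>I. W i j) = 1)"

lemma doubly_stochastic_on_transpose:
  "doubly_stochastic_on J I (\<lambda>j i. W i j) \<longleftrightarrow> doubly_stochastic_on I J W"
  unfolding doubly_stochastic_on_def by auto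

lemma orthonormal_mat_squares_doubly_stochastic:
  assumes "orthonormal_mat n M"
  shows "doubly_stochastic_on {..<n} {..<n} (\<lambda>i j. (M $$ (i, j))\<^sup>2)"
  using orthonormal_mat_row_sum_squares[OF assms] orthonormal_mat_col_sum_squares[OF assms]
  unfolding doubly_stochastic_on_def by simp

text \<open>Delete row \<open>p\<close> and column \<open>q\<close> and spread their remaining masses proportionally.
  If \<open>W p q = 1\<close> these masses vanish, so the junk division by \<open>0\<close> is harmless.\<close>

definition contract_stochastic :: "('a \<Rightarrow> 'b \<Rightarrow> real) \<Rightarrow> 'a \<Rightarrow> 'b \<Rightarrow> 'a \<Rightarrow> 'b \<Rightarrow> real" where
  "contract_stochastic W p q i j = W i j + W p j * W i q / (1 - W p q)"

lemma doubly_stochastic_on_col_sum_remove: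
  assumes "finite I" and "doubly_stochastic_on I J W" and "p \<in> I" and "j \<in> J"
  shows "(\<Sum>i\<in>I - {p}. W i j) = 1 - W p j"
  using assms sum.remove[of I p "\<lambda>i. W i j"] unfolding doubly_stochastic_on_def by simp

lemma contract_stochastic_row_sum:
  assumes fin: "finite I" "finite J" and W: "doubly_stochastic_on I J W"
    and p: "p \<in> I" and q: "q \<in> J" and i: "i \<in> I - {p}"
  shows "(\<Sum>j\<in>J - {q}. contract_stochastic W p q i j) = 1"
proof -
  have WT: "doubly_stochastic_on J I (\<lambda>j i. W i j)"
    using W by (rule doubly_stochastic_on_transpose[THEN iffD2])
  have row_i: "(\<Sum>j\<in>J - {q}. W i j) = 1 - W i q" and row_p: "(\<Sum>j\<in>J - {q}. W p j) = 1 - W p q"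
    using doubly_stochastic_on_col_sum_remove[OF fin(2) WT q] p i by auto
  have "(\<Sum>j\<in>J - {q}. contract_stochastic W p q i j) = 1 - W i q + (1 - W p q) * W i q / (1 - W p q)"
    unfolding contract_stochastic_def sum.distrib row_i
    by (simp add: sum_divide_distrib[symmetric] sum_distrib_right[symmetric] row_p)
  also have "\<dots> = 1"
  proof (cases "W p q = 1")
    case True
    have "(\<Sum>l\<in>I - {p}. W l q) = 0"
      using doubly_stochastic_on_col_sum_remove[OF fin(1) W p q] True by simp
    then have "W i q = 0"
      using W fin(1) i q sum_nonneg_eq_0_iff[of "I - {p}" "\<lambda>l. W l q"]
      unfolding doubly_stochastic_on_def by simp
    then show ?thesis by simp
  qed simp
  finally show ?thesis .
qed

lemma doubly_stochastic_on_contract: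
  assumes fin: "finite I" "finite J" and W: "doubly_stochastic_on I J W" and p: "p \<in> I" and q: "q \<in> J"
  shows "doubly_stochastic_on (I - {p}) (J - {q}) (contract_stochastic W p q)"
proof -
  have WT: "doubly_stochastic_on J I (\<lambda>j i. W i j)"
    using W by (rule doubly_stochastic_on_transpose[THEN iffD2])
  have "W p q \<le> (\<Sum>j\<in>J. W p j)"
    using W fin(2) p q member_le_sum[of q J "W p"] unfolding doubly_stochastic_on_def by simp
  then have "W p q \<le> 1"
    using W p unfolding doubly_stochastic_on_def by simp
  then have "\<forall>i\<in>I - {p}. \<forall>j\<in>J - {q}. 0 \<le> contract_stochastic W p q i j"
    using W p q unfolding doubly_stochastic_on_def contract_stochastic_def by simp
  moreover have "\<forall>j\<in>J - {q}. (\<Sum>i\<in>I - {p}. contract_stochastic W p q i j) = 1"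
    using contract_stochastic_row_sum[OF fin(2,1) WT q p]
    by (simp add: contract_stochastic_def mult.commute)
  ultimately show ?thesis
    using contract_stochastic_row_sum[OF fin W p q] unfolding doubly_stochastic_on_def by blast
qed

lemma product_weight_rearrangement_le:
  fixes a x :: "'a \<Rightarrow> real" and b y :: "'b \<Rightarrow> real"
  assumes fin: "finite I" "finite J"
    and a: "\<forall>i\<in>I. 0 \<le> a i" "(\<Sum>i\<in>I. a i) = s"
    and b: "\<forall>j\<in>J. 0 \<le> b j" "(\<Sum>j\<in>J. b j) = s"
    and x_max: "\<forall>i\<in>I. x i \<le> xp" and y_min: "\<forall>j\<in>J. yq \<le> y j"
  shows "s * xp * yq + (\<Sum>i\<in>I. \<Sum>j\<in>J. a i * b j * x i * y j) / s
    \<le> xp * (\<Sum>j\<in>J. b j * y j) + yq * (\<Sum>i\<in>I. a i * x i)"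
proof (cases "s = 0")
  case True
  then have "\<forall>i\<in>I. a i = 0" and "\<forall>j\<in>J. b j = 0"
    using a b sum_nonneg_eq_0_iff[OF fin(1), of a] sum_nonneg_eq_0_iff[OF fin(2), of b] by auto
  with True show ?thesis
    by simp
next
  case False
  define X Y Z where "X = (\<Sum>j\<in>J. b j * y j)" and "Y = (\<Sum>i\<in>I. a i * x i)"
    and "Z = (\<Sum>i\<in>I. \<Sum>j\<in>J. a i * b j * x i * y j)"
  have s: "0 < s"
    using False a sum_nonneg[of I a] by simp
  \<comment> \<open>the rearrangement inequality for the pair \<open>(xp, yq)\<close> against every \<open>(x i, y j)\<close>\<close>
  have "0 \<le> (\<Sum>i\<in>I. \<Sum>j\<in>J. a i * b j * ((xp - x i) * (y j - yq)))"
    using a b x_max y_min by (intro sum_nonneg mult_nonneg_nonneg) auto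
  also have "\<dots> = (\<Sum>i\<in>I. \<Sum>j\<in>J. xp * a i * (b j * y j) - xp * yq * a i * b j
      - a i * b j * x i * y j + yq * (a i * x i) * b j)"
    by (intro sum.cong refl) (simp add: algebra_simps)
  also have "\<dots> = (\<Sum>i\<in>I. xp * a i * X - xp * yq * a i * s
      - (\<Sum>j\<in>J. a i * b j * x i * y j) + yq * (a i * x i) * s)"
    unfolding X_def b(2)[symmetric] by (simp only: sum_subtractf sum.distrib sum_distrib_left[symmetric])
  also have "\<dots> = xp * s * X - xp * yq * s * s - Z + yq * Y * s"
    unfolding Y_def Z_def a(2)[symmetric]
    by (simp only: sum_subtractf sum.distrib sum_distrib_left[symmetric] sum_distrib_right[symmetric])
  finally have "s * (s * xp * yq + Z / s) \<le> s * (xp * X + yq * Y)"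
    using s by (simp add: algebra_simps)
  then show ?thesis
    using s unfolding X_def Y_def Z_def by simp
qed

lemma contract_stochastic_weighted_sum_le:
  assumes fin: "finite I" "finite J" and W: "doubly_stochastic_on I J W"
    and p: "p \<in> I" and q: "q \<in> J"
    and x_max: "\<forall>i\<in>I. x i \<le> x p" and y_min: "\<forall>j\<in>J. y q \<le> y j"
  shows "x p * y q + (\<Sum>i\<in>I - {p}. \<Sum>j\<in>J - {q}. contract_stochastic W p q i j * x i * y j)
      \<le> (\<Sum>i\<in>I. \<Sum>j\<in>J. W i j * x i * y j)"
proof -
  define I' J' where "I' = I - {p}" and "J' = J - {q}"
  define s where "s = 1 - W p q"
  define R where "R = (\<Sum>i\<in>I'. \<Sum>j\<in>J'. W i j * x i * y j)"
  have WT: "doubly_stochastic_on J I (\<lambda>j i. W i j)"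
    using W by (rule doubly_stochastic_on_transpose[THEN iffD2])
  have "(\<Sum>j\<in>J'. W p j) = s" and "(\<Sum>i\<in>I'. W i q) = s"
    using doubly_stochastic_on_col_sum_remove[OF fin(2) WT q p]
      doubly_stochastic_on_col_sum_remove[OF fin(1) W p q]
    unfolding I'_def J'_def s_def by simp_all
  moreover have "\<forall>j\<in>J'. 0 \<le> W p j" and "\<forall>i\<in>I'. 0 \<le> W i q"
    using W p q unfolding I'_def J'_def doubly_stochastic_on_def by simp_all
  ultimately have transfer: "s * x p * y q + (\<Sum>i\<in>I'. \<Sum>j\<in>J'. W i q * W p j * x i * y j) / s
      \<le> x p * (\<Sum>j\<in>J'. W p j * y j) + y q * (\<Sum>i\<in>I'. W i q * x i)"
    using fin x_max y_min unfolding I'_def J'_def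
    by (intro product_weight_rearrangement_le[where a = "\<lambda>i. W i q" and b = "W p"]) auto
  have row: "(\<Sum>j\<in>J. W i j * x i * y j) = W i q * x i * y q + (\<Sum>j\<in>J'. W i j * x i * y j)" for i
    using sum.remove[OF fin(2) q] unfolding J'_def by simp
  have "(\<Sum>i\<in>I. \<Sum>j\<in>J. W i j * x i * y j)
      = (\<Sum>j\<in>J. W p j * x p * y j) + (\<Sum>i\<in>I'. \<Sum>j\<in>J. W i j * x i * y j)"
    using sum.remove[OF fin(1) p] unfolding I'_def by simp
  also have "\<dots> = (1 - s) * x p * y q + x p * (\<Sum>j\<in>J'. W p j * y j)
      + y q * (\<Sum>i\<in>I'. W i q * x i) + R"
    unfolding row sum.distrib R_def s_def
    by (simp add: sum_distrib_left sum_distrib_right mult_ac)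
  finally have whole: "(\<Sum>i\<in>I. \<Sum>j\<in>J. W i j * x i * y j)
      = x p * y q - s * x p * y q + x p * (\<Sum>j\<in>J'. W p j * y j) + y q * (\<Sum>i\<in>I'. W i q * x i) + R"
    by (simp add: algebra_simps)
  have "(\<Sum>i\<in>I'. \<Sum>j\<in>J'. contract_stochastic W p q i j * x i * y j)
      = R + (\<Sum>i\<in>I'. \<Sum>j\<in>J'. W i q * W p j * x i * y j) / s"
    unfolding contract_stochastic_def R_def s_def
    by (simp add: algebra_simps sum.distrib sum_divide_distrib[symmetric])
  with transfer whole show ?thesis
    unfolding I'_def J'_def by linarith
qed

theorem doubly_stochastic_assignment_bound:
  fixes x :: "'a \<Rightarrow> real" and y :: "'b \<Rightarrow> real"
  assumes "finite I" and "finite J" and "card I = card J" and "doubly_stochastic_on I J W"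
  shows "\<exists>\<sigma>. bij_betw \<sigma> I J
    \<and> (\<Sum>i\<in>I. x i * y (\<sigma> i)) \<le> (\<Sum>i\<in>I. \<Sum>j\<in>J. W i j * x i * y j)"
  using assms
proof (induction "card I" arbitrary: I J W)
  case 0
  then show ?case
    by (auto simp: bij_betw_def)
next
  case (Suc m I J W)
  then have fin: "finite I" "finite J" and W: "doubly_stochastic_on I J W"
    and ne: "I \<noteq> {}" "J \<noteq> {}"
    by auto
  obtain p where p: "p \<in> I" and x_max: "\<forall>i\<in>I. x i \<le> x p"
    using Max_in[of "x ` I"] Max_ge[of "x ` I"] fin ne by fastforce
  obtain q where q: "q \<in> J" and y_min: "\<forall>j\<in>J. y q \<le> y j"
    using Min_in[of "y ` J"] Min_le[of "y ` J"] fin ne by fastforce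
  have "m = card (I - {p})" and "card (I - {p}) = card (J - {q})"
    using Suc.hyps(2) Suc.prems(3) fin p q by simp_all
  then obtain \<sigma>' where \<sigma>': "bij_betw \<sigma>' (I - {p}) (J - {q})"
    and le: "(\<Sum>i\<in>I - {p}. x i * y (\<sigma>' i))
      \<le> (\<Sum>i\<in>I - {p}. \<Sum>j\<in>J - {q}. contract_stochastic W p q i j * x i * y j)"
    using Suc.hyps(1) doubly_stochastic_on_contract[OF fin W p q] fin by blast
  define \<sigma> where "\<sigma> = \<sigma>'(p := q)"
  have "bij_betw \<sigma> (I - {p}) (J - {q})"
    using \<sigma>' unfolding \<sigma>_def by (rule bij_betw_cong[THEN iffD1, rotated]) auto
  then have "bij_betw \<sigma> I J"
    using notIn_Un_bij_betw3[of p "I - {p}" \<sigma> "J - {q}"] p q unfolding \<sigma>_def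
    by (simp add: insert_absorb)
  moreover have "(\<Sum>i\<in>I. x i * y (\<sigma> i)) = x p * y q + (\<Sum>i\<in>I - {p}. x i * y (\<sigma>' i))"
    using sum.remove[OF fin(1) p, of "\<lambda>i. x i * y (\<sigma> i)"] unfolding \<sigma>_def
    by simp
  ultimately show ?case
    using le contract_stochastic_weighted_sum_le[OF fin W p q x_max y_min] by fastforce
qed

section \<open>Elementary symmetric functions and the dual gauge\<close>

lemma elem_sym_permute:
  assumes v: "v \<in> carrier_vec n" and \<tau>: "bij_betw \<tau> {..<n} {..<n}"
  shows "elem_sym j (vec n (\<lambda>i. v $ \<tau> i)) = elem_sym j v"
proof -
  let ?F = "{I. I \<subseteq> {..<n} \<and> card I = j}"
  have inj: "inj_on \<tau> {..<n}"
    using \<tau> by (rule bij_betw_imp_inj_on)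
  have "inj_on (image \<tau>) ?F"
    using inj_on_image_Pow[OF inj] by (auto intro: inj_on_subset)
  moreover have "image \<tau> ` ?F = ?F"
  proof -
    have "image \<tau> ` ?F \<subseteq> ?F" 
      using \<tau> inj by (auto simp: bij_betw_def card_image inj_on_subset)
    moreover have "?F \<subseteq> image \<tau> ` ?F"
    proof
      fix K assume K: "K \<in> ?F"
      then have "K \<subseteq> \<tau> ` {..<n}"
        using \<tau> by (simp add: bij_betw_def)
      then obtain I where "I \<subseteq> {..<n}" and "K = \<tau> ` I"
        by (auto simp: subset_image_iff)
      then show "K \<in> image \<tau> ` ?F"
        using K inj by (auto simp: card_image inj_on_subset)
    qed
    ultimately show ?thesis by blast
  qed
  ultimately have "(\<Sum>I\<in>?F. \<Prod>i\<in>\<tau> ` I. v $ i) = (\<Sum>K\<in>?F. \<Prod>i\<in>K. v $ i)"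
    using sum.reindex[of "image \<tau>" ?F "\<lambda>K. \<Prod>i\<in>K. v $ i"] by simp
  moreover have "(\<Sum>I\<in>?F. \<Prod>i\<in>I. v $ \<tau> i) = (\<Sum>I\<in>?F. \<Prod>i\<in>\<tau> ` I. v $ i)"
    using inj by (intro sum.cong refl) (auto simp: prod.reindex inj_on_subset)
  moreover have "elem_sym j (vec n (\<lambda>i. v $ \<tau> i)) = (\<Sum>I\<in>?F. \<Prod>i\<in>I. v $ \<tau> i)"
    unfolding elem_sym_def by (intro sum.cong) (auto simp: atLeast0LessThan intro!: prod.cong)
  moreover have "elem_sym j v = (\<Sum>K\<in>?F. \<Prod>i\<in>K. v $ i)"
    using v unfolding elem_sym_def by (simp add: atLeast0LessThan)
  ultimately show ?thesis
    by simp
qed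

lemma elem_sym_smult: "elem_sym j (c \<cdot>\<^sub>v v) = c ^ j * elem_sym j v"
  unfolding elem_sym_def sum_distrib_left
proof (intro sum.cong)
  fix I assume "I \<in> {I. I \<subseteq> {0..<dim_vec v} \<and> card I = j}"
  then have I: "I \<subseteq> {0..<dim_vec v}" and "card I = j"
    by auto
  have "(\<Prod>i\<in>I. (c \<cdot>\<^sub>v v) $ i) = (\<Prod>i\<in>I. c * v $ i)"
    using I by (intro prod.cong) auto
  then show "(\<Prod>i\<in>I. (c \<cdot>\<^sub>v v) $ i) = c ^ j * (\<Prod>i\<in>I. v $ i)"
    using \<open>card I = j\<close> by (simp add: prod.distrib)
qed simp

lemma rho_smult:
  assumes "0 < k" and "0 \<le> c"
  shows "rho k (c \<cdot>\<^sub>v v) = c * rho k v"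
proof -
  have "rho k (c \<cdot>\<^sub>v v) = root k (c ^ k * (elem_sym k v / real (dim_vec v choose k)))"
    unfolding rho_def elem_sym_smult by simp
  also have "\<dots> = c * rho k v"
    unfolding real_root_mult rho_def using assms by (simp add: real_root_pos2)
  finally show ?thesis .
qed

lemma rho_pos:
  assumes "1 \<le> k" and "k \<le> n" and "lam \<in> Gamma n k"
  shows "0 < rho k lam"
proof -
  have "0 < elem_sym k lam" and "dim_vec lam = n"
    using assms unfolding Gamma_def by auto
  then show ?thesis
    using assms(1,2) unfolding rho_def by simp
qed

lemma rho_dual_le:
  assumes mu: "mu \<in> Gamma_dual n k" and nu: "nu \<in> Gamma n k" "1 \<le> rho k nu"
  shows "rho_dual k mu \<le> mu \<bullet> nu / n"
  unfolding rho_dual_def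
proof (rule cInf_lower)
  show "mu \<bullet> nu / n \<in> {mu \<bullet> x / real (dim_vec mu) | x. x \<in> Gamma (dim_vec mu) k \<and> 1 \<le> rho k x}"
    using mu nu unfolding Gamma_dual_def by auto
  show "bdd_below {mu \<bullet> x / real (dim_vec mu) | x. x \<in> Gamma (dim_vec mu) k \<and> 1 \<le> rho k x}"
    using mu unfolding Gamma_dual_def by (intro bdd_belowI[of _ 0]) auto
qed

theorem rho_mult_rho_dual_le_permuted_sum:
  assumes k: "1 \<le> k" "k \<le> n" and lam: "lam \<in> Gamma n k" and mu: "mu \<in> Gamma_dual n k"
    and \<sigma>: "bij_betw \<sigma> {..<n} {..<n}"
  shows "real n * (rho k lam * rho_dual k mu) \<le> (\<Sum>i<n. lam $ i * mu $ \<sigma> i)"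
proof -
  define \<tau> where "\<tau> = inv_into {..<n} \<sigma>"
  have \<tau>: "bij_betw \<tau> {..<n} {..<n}"
    unfolding \<tau>_def using \<sigma> by (rule bij_betw_inv_into)
  have lamc: "lam \<in> carrier_vec n" and muc: "mu \<in> carrier_vec n"
    using lam mu unfolding Gamma_def Gamma_dual_def by simp_all
  define r where "r = rho k lam"
  have r: "0 < r"
    unfolding r_def using k lam by (rule rho_pos)
  define nu where "nu = (1 / r) \<cdot>\<^sub>v vec n (\<lambda>i. lam $ \<tau> i)"
  have nu_elem_sym: "elem_sym j nu = (1 / r) ^ j * elem_sym j lam" for j
    unfolding nu_def elem_sym_smult elem_sym_permute[OF lamc \<tau>] ..
  have "nu \<in> carrier_vec n"
    unfolding nu_def by simp
  then have "nu \<in> Gamma n k"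
    using lam r unfolding Gamma_def by (simp add: nu_elem_sym)
  moreover have "rho k (vec n (\<lambda>i. lam $ \<tau> i)) = r"
    unfolding r_def rho_def using lamc by (simp add: elem_sym_permute[OF lamc \<tau>])
  then have "rho k nu = 1"
    unfolding nu_def using k r by (simp add: rho_smult)
  ultimately have "rho_dual k mu \<le> mu \<bullet> nu / n"
    using rho_dual_le[OF mu] by simp
  also have "mu \<bullet> nu = (\<Sum>j<n. mu $ j * lam $ \<tau> j) / r"
    using muc unfolding nu_def by (simp add: scalar_prod_def atLeast0LessThan sum_divide_distrib)
  also have "(\<Sum>j<n. mu $ j * lam $ \<tau> j) = (\<Sum>i<n. mu $ \<sigma> i * lam $ \<tau> (\<sigma> i))"
    using sum.reindex_bij_betw[OF \<sigma>, of "\<lambda>j. mu $ j * lam $ \<tau> j"] by simp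
  also have "\<dots> = (\<Sum>i<n. lam $ i * mu $ \<sigma> i)"
    using \<sigma> unfolding \<tau>_def by (intro sum.cong refl) (simp add: bij_betw_inv_into_left mult.commute)
  finally show ?thesis
    using r k by (simp add: r_def field_simps)
qed

theorem proposition2p1:
  fixes n k :: nat and A B :: "real mat" and lam mu :: "real vec"
  assumes "1 \<le> k" and "k \<le> n"
    and "A \<in> sym_mats n" and "B \<in> sym_mats n"
    and "eigenvalue_vector A lam" and "eigenvalue_vector B mu"
    and "lam \<in> Gamma n k" and "mu \<in> Gamma_dual n k"
  shows "rho k lam * rho_dual k mu \<le> mat_dot A B / real n"
proof -
  obtain P where P: "orthonormal_mat n P" and A: "A = P * mat_diag n (\<lambda>i. lam $ i) * transpose_mat P"
    using sym_mats_eigen_decomposition[OF assms(3,5)] .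
  obtain Q where Q: "orthonormal_mat n Q" and B: "B = Q * mat_diag n (\<lambda>i. mu $ i) * transpose_mat Q"
    using sym_mats_eigen_decomposition[OF assms(4,6)] .
  define W where "W i j = ((transpose_mat P * Q) $$ (i, j))\<^sup>2" for i j
  have dot: "mat_dot A B = (\<Sum>i<n. \<Sum>j<n. W i j * lam $ i * mu $ j)"
    unfolding A B W_def using P Q unfolding orthonormal_mat_def by (simp add: mat_dot_spectral_decompositions)
  have "doubly_stochastic_on {..<n} {..<n} W"
    unfolding W_def using P Q
    by (intro orthonormal_mat_squares_doubly_stochastic orthonormal_mat_mult orthonormal_mat_transpose)
  then obtain \<sigma> where \<sigma>: "bij_betw \<sigma> {..<n} {..<n}"
    and "(\<Sum>i<n. lam $ i * mu $ \<sigma> i) \<le> mat_dot A B"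
    using doubly_stochastic_assignment_bound[of "{..<n}" "{..<n}" W "\<lambda>i. lam $ i" "\<lambda>j. mu $ j"] dot
    by auto
  then have "real n * (rho k lam * rho_dual k mu) \<le> mat_dot A B"
    using rho_mult_rho_dual_le_permuted_sum[OF assms(1,2,7,8) \<sigma>] by linarith
  then show ?thesis
    using assms(1,2) by (simp add: pos_le_divide_eq mult.commute)
qed

end
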